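(* For a word $w\in\mathcal{A}^*$ let $\iota(w)$ denote the word obtained from $w$ by deleting every occurrence of every letter that occurs more than once in $w$ (so $\iota(w)$ is the subsequence of letters occurring exactly once, in their order in $w$); this depends only on the element of ${\mathsf{stal}}$ represented by $w$. (1) Two elements $s,t\in{\mathsf{stal}}$ lie in the same connected component of $K({\mathsf{stal}})$ if and only if $s\equiv_{\mathrm{ev}}t$ and $\iota(s)$ and $\iota(t)$ are cyclic rotations of each other as words (i.e. $\iota(s)=pq$ and $\iota(t)=qp$ for some words $p,q$). (2) The maximum diameter of a connected component of $K({\mathsf{stal}})$ is $3$. (3) The maximum diameter of a connected component of $K({\mathsf{stal}}_n)$ is $3$ if $n\ge3$, is $1$ if $n=2$, and is $0$ if $n=1$.
   Context: Let $\mathcal{A}=\{1<2<3<\cdots\}$ be the ordered alphabet of positive integers and $\mathcal{A}_n=\{1<2<\cdots<n\}$. For a monoid $M$ and $s,t\in M$, write $s\sim t$ if there exist $x,y\in M$ with $s=xy$ and $t=yx$ (a cyclic shift); $\sim^*$ is the reflexive–transitive closure of $\sim$. The cyclic shift graph $K(M)$ is the undirected graph with vertex set $M$ and an edge between $s$ and $t$ iff $s\sim t$; its connected components are the $\sim^*$-classes, and distances/diameters are graph distances in $K(M)$. The evaluation of a word $w$ is the tuple $(|w|_a)_{a}$ giving the number of occurrences of each letter $a$; all monoids considered are defined by presentations whose defining relations preserve evaluation, so the evaluation of an element is well defined, and $s\equiv_{\mathrm{ev}} t$ means $s$ and $t$ have the same evaluation. The stalactic monoid ${\mathsf{stal}}$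 is $\mathcal{A}^*$ modulo the congruence generated by the relations $bavb=abvb$ for all letters $a,b$ and words $v\in\mathcal{A}^*$; ${\mathsf{stal}}_n$ is defined by the same relations over $\mathcal{A}_n$. Equivalently, two words are equal in ${\mathsf{stal}}$ iff they have the same evaluation and the same order of rightmost occurrences of their letters. *)

theory Defs
  imports Main
begin

text \<open>The stalactic monoid over \<open>\<Sigma>\<close> is the quotient of \<open>lists \<Sigma>\<close> by the congruence
  generated by the relations \<open>b a v b = a b v b\<close> (a, b letters, v a word).
  Its elements are represented as equivalence classes (sets of words).\<close>

definition stal_step :: "nat set \<Rightarrow> nat list \<Rightarrow> nat list \<Rightarrow> bool" where
  "stal_step \<Sigma> u w \<longleftrightarrow> (\<exists>a\<in>\<Sigma>. \<exists>b\<in>\<Sigma>. \<exists>p\<in>lists \<Sigma>. \<exists>v\<in>lists \<Sigma>. \<exists>q\<in>lists \<Sigma>.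
      u = p @ [b, a] @ v @ [b] @ q \<and> w = p @ [a, b] @ v @ [b] @ q)"

definition stal_eq :: "nat set \<Rightarrow> nat list \<Rightarrow> nat list \<Rightarrow> bool" where
  "stal_eq \<Sigma> = equivclp (stal_step \<Sigma>)"

definition stal_class :: "nat set \<Rightarrow> nat list \<Rightarrow> nat list set" where
  "stal_class \<Sigma> w = {v. stal_eq \<Sigma> w v}"

definition stal_elems :: "nat set \<Rightarrow> nat list set set" where
  "stal_elems \<Sigma> = stal_class \<Sigma> ` lists \<Sigma>"

text \<open>Cyclic shift relation: \<open>s \<sim> t\<close> iff \<open>s = xy\<close>, \<open>t = yx\<close> for elements x, y
  (the product of classes [x][y] is the class [xy]).\<close>
definition cshift :: "nat set \<Rightarrow> nat list set \<Rightarrow> nat list set \<Rightarrow> bool" where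
  "cshift \<Sigma> s t \<longleftrightarrow> (\<exists>x\<in>lists \<Sigma>. \<exists>y\<in>lists \<Sigma>.
      s = stal_class \<Sigma> (x @ y) \<and> t = stal_class \<Sigma> (y @ x))"

definition K_conn :: "nat set \<Rightarrow> nat list set \<Rightarrow> nat list set \<Rightarrow> bool" where
  "K_conn \<Sigma> s t \<longleftrightarrow> (cshift \<Sigma>)\<^sup>*\<^sup>* s t"

text \<open>Graph distance in K(M) (meaningful for connected pairs).\<close>
definition K_dist :: "nat set \<Rightarrow> nat list set \<Rightarrow> nat list set \<Rightarrow> nat" where
  "K_dist \<Sigma> s t = (LEAST k. (cshift \<Sigma> ^^ k) s t)"

definition max_comp_diam :: "nat set \<Rightarrow> nat \<Rightarrow> bool" where
  "max_comp_diam \<Sigma> d \<longleftrightarrow>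
     (\<forall>s\<in>stal_elems \<Sigma>. \<forall>t\<in>stal_elems \<Sigma>. K_conn \<Sigma> s t \<longrightarrow> K_dist \<Sigma> s t \<le> d) \<and>
     (\<exists>s\<in>stal_elems \<Sigma>. \<exists>t\<in>stal_elems \<Sigma>. K_conn \<Sigma> s t \<and> K_dist \<Sigma> s t = d)"

definition alphA :: "nat set" where "alphA = {a. 1 \<le> a}"
definition alphAn :: "nat \<Rightarrow> nat set" where "alphAn n = {1..n}"

definition iota :: "nat list \<Rightarrow> nat list" where
  "iota w = filter (\<lambda>a. count_list w a = 1) w"

end

theory Submission
  imports Defs
begin

text \<open>A non-final occurrence of a letter may travel freely as long as it stays before the last
  occurrence of that letter, so an element of \<open>stal\<close> is determined by its evaluation together
  with \<open>\<rho>(w)\<close>, the letters of \<open>w\<close> in the order of their last occurrences.  A cyclic shift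
  \<open>xy \<mapsto> yx\<close> keeps the evaluation and rotates the subsequence \<open>\<iota>\<close> of letters occurring once,
  which gives the invariants of (1).  Conversely, suppose \<open>\<iota>(u) = pq\<close> and \<open>\<iota>(v) = qp\<close>, let \<open>E\<close>
  contain every repeated letter of \<open>u\<close> once less often than \<open>u\<close> does, and put \<open>r = \<rho>(E)\<close>.  Then
  \<open>u = E\<rho>(u) \<sim> \<rho>(u)E = pEqr \<sim> qrpE = qEpr = \<rho>(v)E \<sim> E\<rho>(v) = v\<close>,
  so every component has diameter at most 3.  The bound is attained by \<open>1123\<close> and \<open>1132\<close>:
  both classes are singletons, so their neighbours are the classes of their rotations, and no
  rotation of one has the same \<open>\<rho>\<close> as a rotation of the other.  Over two letters every element
  with a given evaluation is \<open>1\<^sup>i2\<^sup>j\<close> or \<open>2\<^sup>j1\<^sup>i\<close>, which are cyclic shifts of each other, and over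
  one letter every cyclic shift is trivial.\<close>

lemma count_list_pos_iff: "0 < count_list xs x \<longleftrightarrow> x \<in> set xs"
  using count_list_0_iff[of xs x] by auto

lemma count_list_filter: "count_list (filter P xs) a = (if P a then count_list xs a else 0)"
  by (induction xs) auto

lemma count_list_replicate: "count_list (replicate k b) a = (if a = b then k else 0)"
  by (induction k) auto

lemma count_list_distinct: "distinct xs \<Longrightarrow> count_list xs a = (if a \<in> set xs then 1 else 0)"
  by (induction xs) auto

lemma distinct_iff_count_list_le_1: "distinct xs \<longleftrightarrow> (\<forall>a. count_list xs a \<le> 1)"
proof (induction xs)
  case (Cons a xs)
  have "(\<forall>b. count_list (a # xs) b \<le> 1) \<longleftrightarrow> count_list xs a = 0 \<and> (\<forall>b. count_list xs b \<le> 1)"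
    by (auto simp: le_Suc_eq)
  then show ?case
    using Cons.IH by (simp add: count_list_0_iff)
qed simp

lemma remdups_append_conv: "remdups (xs @ ys) = filter (\<lambda>x. x \<notin> set ys) (remdups xs) @ remdups ys"
  by (induction xs) auto

lemma remdups_append_distinct_disjoint:
  "distinct xs \<Longrightarrow> set xs \<inter> set ys = {} \<Longrightarrow> remdups (xs @ ys) = xs @ remdups ys"
  by (auto simp: remdups_append_conv distinct_remdups_id intro!: filter_True)

lemma remdups_replicate: "remdups (replicate k a) = (if k = 0 then [] else [a])"
  by (induction k) auto

lemma ex_count_list_eq_minus_1: "\<exists>E. count_list E = (\<lambda>a. count_list w a - 1)"
proof (induction w)
  case Nil
  have "count_list [] = (\<lambda>a. count_list [] a - 1)"
    by auto
  then show ?case ..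
next
  case (Cons b w)
  then obtain E where E: "count_list E = (\<lambda>a. count_list w a - 1)"
    by blast
  show ?case
  proof (cases "b \<in> set w")
    case True
    then have "count_list (b # E) = (\<lambda>a. count_list (b # w) a - 1)"
      using E count_list_pos_iff[of w b] by (auto simp: fun_eq_iff)
    then show ?thesis ..
  next
    case False
    then have "count_list E = (\<lambda>a. count_list (b # w) a - 1)"
      using E by (auto simp: fun_eq_iff)
    then show ?thesis ..
  qed
qed

lemma set_eq_if_count_list_minus_1:
  assumes "count_list E = (\<lambda>a. count_list w a - 1)"
  shows "set E = {a. 2 \<le> count_list w a}"
  using assms by (auto simp flip: count_list_pos_iff)

lemma set_subset_if_count_list_minus_1:
  assumes "count_list E = (\<lambda>a. count_list w a - 1)"
  shows "set E \<subseteq> set w"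
  by (auto simp: set_eq_if_count_list_minus_1[OF assms] simp flip: count_list_pos_iff)

lemma ex_rotate_iff_append: "(\<exists>n. ys = rotate n xs) \<longleftrightarrow> (\<exists>p q. xs = p @ q \<and> ys = q @ p)"
proof
  assume "\<exists>n. ys = rotate n xs"
  then obtain n where "ys = rotate n xs"
    by blast
  then show "\<exists>p q. xs = p @ q \<and> ys = q @ p"
    by (metis append_take_drop_id rotate_drop_take)
qed (metis rotate_append)

lemma rotate_mem_rotations_4:
  assumes "length xs = 4"
  shows "rotate n xs \<in> {xs, rotate 1 xs, rotate 2 xs, rotate 3 xs}"
proof -
  have r: "rotate n xs = rotate (n mod 4) xs"
    using rotate_conv_mod[of n xs] assms by simp
  have "n mod 4 = 0 \<or> n mod 4 = 1 \<or> n mod 4 = 2 \<or> n mod 4 = 3"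
    by presburger
  then show ?thesis
    unfolding r by (elim disjE) simp_all
qed

lemma distinct_two_letters_cases:
  assumes "distinct xs" "set xs \<subseteq> {a, b}"
  shows "xs \<in> {[], [a], [b], [a, b], [b, a]}"
proof -
  consider "xs = []" | x where "xs = [x]" | x y where "xs = [x, y]" | x y z zs where "xs = x # y # z # zs"
    by (metis list.exhaust)
  then show ?thesis
    using assms by cases auto
qed

lemma eq_replicate_append_if_remdups_eq_Cons:
  assumes "remdups w = a # r" "\<forall>b. b \<noteq> a \<longrightarrow> count_list w b \<le> 1"
  shows "w = replicate (count_list w a) a @ r"
  using assms
proof (induction w)
  case (Cons x w)
  show ?case
  proof (cases "x \<in> set w")
    case True
    then have "1 < count_list (x # w) x"
      by (simp add: count_list_pos_iff)
    then have "x = a"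
      using Cons.prems(2) by force
    have "remdups w = a # r"
      using Cons.prems(1) True by simp
    moreover have "\<forall>b. b \<noteq> a \<longrightarrow> count_list w b \<le> 1"
      using Cons.prems(2) \<open>x = a\<close> by simp
    ultimately have "w = replicate (count_list w a) a @ r"
      by (rule Cons.IH)
    then show ?thesis
      using \<open>x = a\<close> by simp
  next
    case False
    then have "x = a" "remdups w = r"
      using Cons.prems(1) by simp_all
    moreover have "distinct w"
      unfolding distinct_iff_count_list_le_1 using Cons.prems(2) \<open>x = a\<close> False
      by (metis count_list.simps(2) count_notin le_zero_eq nat_le_linear)
    ultimately show ?thesis
      using False by (simp add: distinct_remdups_id)
  qed
qed simp

section \<open>The word problem\<close>

text \<open>Note that \<open>remdups\<close> keeps the last occurrence of each letter, so it records the order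
  of rightmost occurrences.\<close>

lemma stal_step_preserves_count_remdups:
  assumes "stal_step S u v"
  shows "count_list u = count_list v \<and> remdups u = remdups v"
proof -
  obtain a b p w q where u: "u = p @ [b, a] @ w @ [b] @ q" and v: "v = p @ [a, b] @ w @ [b] @ q"
    using assms unfolding stal_step_def by blast
  have "remdups ([b, a] @ w @ [b] @ q) = remdups ([a, b] @ w @ [b] @ q)"
    by auto
  then have "remdups u = remdups v"
    unfolding u v by (metis remdups_append2)
  moreover have "count_list u = count_list v"
    unfolding u v by auto
  ultimately show ?thesis by simp
qed

lemma stal_eq_preserves_count_remdups:
  "stal_eq S u v \<Longrightarrow> count_list u = count_list v \<and> remdups u = remdups v"
  unfolding stal_eq_def
  by (induction rule: equivclp_induct) (auto dest: stal_step_preserves_count_remdups)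

lemma stal_step_Cons:
  assumes "stal_step S u v" "c \<in> S"
  shows "stal_step S (c # u) (c # v)"
proof -
  obtain a b p w q where "a \<in> S" "b \<in> S" "p \<in> lists S" "w \<in> lists S" "q \<in> lists S"
      "u = p @ [b, a] @ w @ [b] @ q" "v = p @ [a, b] @ w @ [b] @ q"
    using assms(1) unfolding stal_step_def by blast
  then show ?thesis
    unfolding stal_step_def using assms(2)
    by (intro bexI[of _ a] bexI[of _ b] bexI[of _ "c # p"] bexI[of _ w] bexI[of _ q]) auto
qed

lemma stal_eq_Cons:
  assumes "stal_eq S u v" "c \<in> S"
  shows "stal_eq S (c # u) (c # v)"
  using assms(1) unfolding stal_eq_def
proof (induction rule: equivclp_induct)
  case (step v w)
  then have "stal_step S (c # v) (c # w) \<or> stal_step S (c # w) (c # v)"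
    using stal_step_Cons[OF _ assms(2)] by blast
  then show ?case
    by (rule equivclp_into_equivclp[OF step.IH])
qed simp

lemma stal_eq_move_right:
  assumes "B \<in> lists S" "r \<in> lists S" "a \<in> S" "a \<in> set r"
  shows "stal_eq S (a # B @ r) (B @ a # r)"
  using assms(1)
proof (induction B)
  case Nil
  then show ?case by (simp add: stal_eq_def)
next
  case (Cons c B)
  then have "c \<in> S" "B \<in> lists S"
    by simp_all
  obtain w q where wq: "B @ r = w @ a # q"
    using assms(4) split_list[of a "B @ r"] by auto
  have "w @ a # q \<in> lists S"
    using \<open>B \<in> lists S\<close> assms(2) unfolding wq[symmetric] by simp
  then have "w \<in> lists S" "q \<in> lists S"
    by simp_all
  then have "stal_step S (a # c # B @ r) (c # a # B @ r)"
    unfolding stal_step_def using \<open>c \<in> S\<close> assms(3) wq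
    by (intro bexI[of _ c] bexI[of _ a] bexI[of _ "[]"] bexI[of _ w] bexI[of _ q]) auto
  moreover have "stal_eq S (a # B @ r) (B @ a # r)"
    using Cons.IH \<open>B \<in> lists S\<close> by blast
  then have "stal_eq S (c # a # B @ r) (c # B @ a # r)"
    using \<open>c \<in> S\<close> by (simp add: stal_eq_Cons)
  ultimately show ?case
    unfolding stal_eq_def append_Cons by (blast intro: equivclp_trans r_into_equivclp)
qed

definition stal_nf :: "nat list \<Rightarrow> nat list" where
  "stal_nf w = concat (map (\<lambda>a. replicate (count_list w a) a) (remdups w))"

lemma set_stal_nf: "set (stal_nf w) = set w"
  by (auto simp: stal_nf_def count_list_0_iff)

lemma stal_nf_Cons_notin:
  assumes "a \<notin> set w"
  shows "stal_nf (a # w) = a # stal_nf w"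
  using assms by (auto simp: stal_nf_def intro!: arg_cong[where f = concat] map_cong)

lemma stal_nf_Cons_in:
  assumes "a \<in> set w"
  obtains B r where "stal_nf w = B @ r" "stal_nf (a # w) = B @ a # r" "a \<in> set r"
proof -
  define blk :: "nat list \<Rightarrow> nat \<Rightarrow> nat list" where "blk v = (\<lambda>b. replicate (count_list v b) b)" for v
  have nf: "stal_nf v = concat (map (blk v) (remdups v))" for v
    by (simp add: stal_nf_def blk_def)
  obtain R1 R2 where R: "remdups w = R1 @ a # R2"
    using assms by (metis set_remdups split_list)
  then have "a \<notin> set R1" "a \<notin> set R2"
    using distinct_remdups[of w] by auto
  then have "map (blk (a # w)) R1 = map (blk w) R1" "map (blk (a # w)) R2 = map (blk w) R2"
    by (auto simp: blk_def)
  moreover have "blk (a # w) a = a # blk w a"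
    by (simp add: blk_def)
  ultimately have "stal_nf (a # w) = concat (map (blk w) R1) @ a # blk w a @ concat (map (blk w) R2)"
    using assms by (simp add: nf R del: map_eq_conv)
  moreover have "stal_nf w = concat (map (blk w) R1) @ blk w a @ concat (map (blk w) R2)"
    by (simp add: nf R)
  moreover have "a \<in> set (blk w a @ concat (map (blk w) R2))"
    using assms by (simp add: blk_def count_list_0_iff)
  ultimately show ?thesis
    using that by blast
qed

lemma stal_eq_stal_nf:
  "w \<in> lists S \<Longrightarrow> stal_eq S w (stal_nf w)"
proof (induction w)
  case Nil
  then show ?case by (simp add: stal_eq_def stal_nf_def)
next
  case (Cons a w)
  have IH: "stal_eq S (a # w) (a # stal_nf w)"
    using Cons by (intro stal_eq_Cons) auto
  show ?case
  proof (cases "a \<in> set w")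
    case True
    then obtain B r where B: "stal_nf w = B @ r" "stal_nf (a # w) = B @ a # r" "a \<in> set r"
      by (rule stal_nf_Cons_in)
    have "B @ r \<in> lists S"
      using Cons.prems B(1) set_stal_nf[of w] by (metis Cons_in_lists_iff in_lists_conv_set)
    then have "stal_eq S (a # B @ r) (B @ a # r)"
      using Cons.prems B(3) by (intro stal_eq_move_right) auto
    moreover have "stal_eq S (a # w) (a # B @ r)"
      using IH B(1) by simp
    ultimately show ?thesis
      unfolding B(2) stal_eq_def by (blast intro: equivclp_trans)
  next
    case False
    then show ?thesis
      using IH by (simp add: stal_nf_Cons_notin)
  qed
qed

lemma stal_class_eq_iff_stal_eq: "stal_class S u = stal_class S v \<longleftrightarrow> stal_eq S u v"
  unfolding stal_class_def stal_eq_def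
proof
  assume "{w. equivclp (stal_step S) u w} = {w. equivclp (stal_step S) v w}"
  then show "equivclp (stal_step S) u v"
    by (metis equivclp_refl mem_Collect_eq)
next
  assume "equivclp (stal_step S) u v"
  then show "{w. equivclp (stal_step S) u w} = {w. equivclp (stal_step S) v w}"
    by (metis (lifting) Collect_cong equivclp_sym equivclp_trans)
qed

lemma stal_class_eq_iff:
  assumes "u \<in> lists S" "v \<in> lists S"
  shows "stal_class S u = stal_class S v \<longleftrightarrow> count_list u = count_list v \<and> remdups u = remdups v"
proof
  assume "count_list u = count_list v \<and> remdups u = remdups v"
  then have "stal_nf u = stal_nf v"
    by (simp add: stal_nf_def)
  then show "stal_class S u = stal_class S v"
    using stal_eq_stal_nf[OF assms(1)] stal_eq_stal_nf[OF assms(2)]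
    unfolding stal_class_eq_iff_stal_eq stal_eq_def by (metis equivclp_sym equivclp_trans)
qed (simp add: stal_class_eq_iff_stal_eq stal_eq_preserves_count_remdups)

lemma stal_class_eqI:
  "u \<in> lists S \<Longrightarrow> v \<in> lists S \<Longrightarrow> count_list u = count_list v \<Longrightarrow> remdups u = remdups v
    \<Longrightarrow> stal_class S u = stal_class S v"
  by (simp add: stal_class_eq_iff)

section \<open>Connected components\<close>

lemma count_list_iota: "count_list (iota w) a = (if count_list w a = 1 then 1 else 0)"
  by (simp add: iota_def count_list_filter)

lemma set_iota: "set (iota w) = {a. count_list w a = 1}"
  by (auto simp: iota_def) (metis count_list_pos_iff zero_less_Suc)

lemma set_iota_subset: "set (iota w) \<subseteq> set w"
  by (auto simp: iota_def)

lemma distinct_iota: "distinct (iota w)"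
  by (simp add: distinct_iff_count_list_le_1 count_list_iota)

lemma iota_eq_filter_remdups: "iota w = filter (\<lambda>a. count_list w a = 1) (remdups w)"
  using distinct_iota[of w] by (metis distinct_remdups_id iota_def remdups_filter)

lemma K_dist_le: "(cshift S ^^ k) s t \<Longrightarrow> K_dist S s t \<le> k"
  unfolding K_dist_def by (rule Least_le)

lemma K_dist_eqI:
  assumes "(cshift S ^^ k) s t" "\<And>j. j < k \<Longrightarrow> \<not> (cshift S ^^ j) s t"
  shows "K_dist S s t = k"
  unfolding K_dist_def using assms by (metis Least_equality not_less)

lemma stal_elemsE:
  assumes "s \<in> stal_elems S"
  obtains u where "u \<in> lists S" "s = stal_class S u"
  using assms unfolding stal_elems_def by blast

lemma cshift_sym: "cshift S s t \<Longrightarrow> cshift S t s"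
  unfolding cshift_def by blast

lemma cshift_refl: "s \<in> stal_elems S \<Longrightarrow> cshift S s s"
  unfolding stal_elems_def cshift_def by (force intro: bexI[of _ "[]"])

lemma cshift_invariants:
  assumes "cshift S (stal_class S u) t" "u \<in> lists S"
  obtains v where "v \<in> lists S" "t = stal_class S v" "count_list v = count_list u"
    "\<exists>n. iota v = rotate n (iota u)"
proof -
  obtain x y where xy: "x \<in> lists S" "y \<in> lists S"
    "stal_class S u = stal_class S (x @ y)" "t = stal_class S (y @ x)"
    using assms(1) unfolding cshift_def by blast
  then have u: "count_list u = count_list (x @ y)" "remdups u = remdups (x @ y)"
    using assms(2) stal_class_eq_iff by auto
  then have "count_list (y @ x) = count_list u"
    by (auto simp: fun_eq_iff)
  moreover have "\<exists>n. iota (y @ x) = rotate n (iota u)"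
  proof -
    define P where "P a \<longleftrightarrow> count_list (x @ y) a = 1" for a
    have "count_list (y @ x) = count_list (x @ y)"
      by (auto simp: fun_eq_iff)
    then have "iota (x @ y) = filter P x @ filter P y" "iota (y @ x) = filter P y @ filter P x"
      unfolding iota_def P_def by (simp_all only: filter_append)
    moreover have "iota u = iota (x @ y)"
      using u by (simp add: iota_eq_filter_remdups)
    ultimately show ?thesis
      unfolding ex_rotate_iff_append by auto
  qed
  ultimately show ?thesis
    using that[of "y @ x"] xy by auto
qed

lemma K_conn_invariants:
  assumes "K_conn S (stal_class S u) (stal_class S v)" "u \<in> lists S" "v \<in> lists S"
  shows "count_list u = count_list v \<and> (\<exists>n. iota v = rotate n (iota u))"
proof -
  have "\<exists>w\<in>lists S. t = stal_class S w \<and> count_list w = count_list u \<and> (\<exists>n. iota w = rotate n (iota u))"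
    if "(cshift S)\<^sup>*\<^sup>* (stal_class S u) t" for t
    using that
  proof (induction rule: rtranclp_induct)
    case base
    then show ?case
      using assms(2) by (metis rotate0 id_apply)
  next
    case (step t t')
    then obtain w n where w: "w \<in> lists S" "t = stal_class S w" "count_list w = count_list u"
        "iota w = rotate n (iota u)"
      by blast
    obtain w' m where "w' \<in> lists S" "t' = stal_class S w'" "count_list w' = count_list w"
        "iota w' = rotate m (iota w)"
      using cshift_invariants step.hyps(2) w(1,2) by metis
    then show ?case
      using w by (metis rotate_rotate)
  qed
  then obtain w n where "w \<in> lists S" "stal_class S v = stal_class S w" "count_list w = count_list u"
      "iota w = rotate n (iota u)"
    using assms(1) unfolding K_conn_def by blast
  then show ?thesis
    using assms(3) stal_class_eq_iff by (metis iota_eq_filter_remdups)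
qed

lemma remdups_split_form:
  assumes "distinct (p @ q)" "set (p @ q) \<inter> set E = {}"
  shows "remdups (p @ E @ q @ remdups E) = p @ q @ remdups E"
proof -
  have "remdups (E @ q @ remdups E) = remdups (q @ remdups E)"
    by (rule remdups_append) auto
  also have "\<dots> = q @ remdups E"
    using assms by (subst remdups_append_distinct_disjoint) auto
  finally show ?thesis
    using assms by (subst remdups_append_distinct_disjoint) auto
qed

text \<open>The list \<open>E\<close> holds every occurrence of a repeated letter of \<open>w\<close> except the last one, and
  \<open>remdups E\<close> restores those last occurrences after the singletons \<open>p @ q\<close>.\<close>

lemma cshift_to_split_form:
  assumes w: "w \<in> lists S" and E: "count_list E = (\<lambda>a. count_list w a - 1)" and pq: "iota w = p @ q"
  shows "cshift S (stal_class S w) (stal_class S (p @ E @ q @ remdups E))"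
proof -
  let ?c = "count_list w"
  have set_E: "set E = {a. 2 \<le> ?c a}"
    using E by (rule set_eq_if_count_list_minus_1)
  have "set E \<subseteq> set w"
    using E by (rule set_subset_if_count_list_minus_1)
  then have lists: "E \<in> lists S" "p \<in> lists S" "q \<in> lists S" "remdups w \<in> lists S"
    using w pq set_iota_subset[of w] by auto
  have "count_list (E @ remdups w) = ?c"
    using E by (auto simp: fun_eq_iff count_list_distinct simp flip: count_list_pos_iff)
  moreover have "remdups (E @ remdups w) = remdups w"
    using \<open>set E \<subseteq> set w\<close> by (simp add: remdups_append)
  ultimately have first: "stal_class S w = stal_class S (E @ remdups w)"
    using lists w by (intro stal_class_eqI) auto
  have disj: "distinct (p @ q)" "set (p @ q) \<inter> set E = {}"
    using distinct_iota[of w] set_iota[of w] set_E pq by auto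
  have "filter (\<lambda>a. a \<notin> set E) (remdups w) = iota w"
    unfolding iota_eq_filter_remdups set_E
    by (rule filter_cong) (auto simp flip: count_list_pos_iff)
  then have "remdups (remdups w @ E) = p @ q @ remdups E"
    using pq by (simp add: remdups_append_conv distinct_remdups_id)
  then have "remdups (remdups w @ E) = remdups (p @ E @ q @ remdups E)"
    using disj by (simp add: remdups_split_form)
  moreover have "count_list (remdups w @ E) = count_list (p @ E @ q @ remdups E)"
  proof
    fix a
    have "count_list p a + count_list q a = (if ?c a = 1 then 1 else 0)"
      using count_list_iota[of w a] pq by simp
    then show "count_list (remdups w @ E) a = count_list (p @ E @ q @ remdups E) a"
      using E set_E by (auto simp: count_list_distinct simp flip: count_list_pos_iff)
  qed
  ultimately have "stal_class S (remdups w @ E) = stal_class S (p @ E @ q @ remdups E)"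
    using lists by (intro stal_class_eqI) auto
  then show ?thesis
    unfolding cshift_def using first lists by blast
qed

lemma cshift_swap_split_form:
  assumes "p \<in> lists S" "q \<in> lists S" "E \<in> lists S"
    and "distinct (p @ q)" "set (p @ q) \<inter> set E = {}"
  shows "cshift S (stal_class S (p @ E @ q @ remdups E)) (stal_class S (q @ E @ p @ remdups E))"
proof -
  have "remdups (q @ remdups E @ p @ E) = q @ remdups (remdups E @ p @ E)"
    using assms(4,5) by (subst remdups_append_distinct_disjoint) auto
  also have "\<dots> = q @ remdups (p @ E)"
    by (subst remdups_append) auto
  also have "\<dots> = q @ p @ remdups E"
    using assms(4,5) by (subst remdups_append_distinct_disjoint) auto
  also have "\<dots> = remdups (q @ E @ p @ remdups E)"
  proof -
    have "distinct (q @ p)" "set (q @ p) \<inter> set E = {}"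
      using assms(4,5) by auto
    then show ?thesis
      by (simp add: remdups_split_form)
  qed
  finally have "remdups (q @ remdups E @ p @ E) = remdups (q @ E @ p @ remdups E)" .
  moreover have "count_list (q @ remdups E @ p @ E) = count_list (q @ E @ p @ remdups E)"
    by (simp add: fun_eq_iff)
  ultimately have "stal_class S ((q @ remdups E) @ (p @ E)) = stal_class S (q @ E @ p @ remdups E)"
    using assms(1-3) by (intro stal_class_eqI) auto
  then show ?thesis
    unfolding cshift_def using assms(1-3)
    by (intro bexI[of _ "p @ E"] bexI[of _ "q @ remdups E"]) auto
qed

lemma cshift_relpowp_3:
  assumes u: "u \<in> lists S" and v: "v \<in> lists S" and "count_list u = count_list v"
    and pq: "iota u = p @ q" "iota v = q @ p"
  shows "(cshift S ^^ 3) (stal_class S u) (stal_class S v)"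
proof -
  obtain E where E: "count_list E = (\<lambda>a. count_list u a - 1)"
    using ex_count_list_eq_minus_1 by blast
  have lists: "E \<in> lists S" "p \<in> lists S" "q \<in> lists S"
    using u pq set_subset_if_count_list_minus_1[OF E] set_iota_subset[of u] by auto
  have "distinct (p @ q)"
    using distinct_iota[of u] pq by simp
  moreover have "set (p @ q) \<inter> set E = {}"
    using set_iota[of u] set_eq_if_count_list_minus_1[OF E] pq by auto
  ultimately have "cshift S (stal_class S (p @ E @ q @ remdups E)) (stal_class S (q @ E @ p @ remdups E))"
    by (rule cshift_swap_split_form[OF lists(2,3,1)])
  moreover have "cshift S (stal_class S u) (stal_class S (p @ E @ q @ remdups E))"
    using u E pq(1) by (rule cshift_to_split_form)
  moreover have "cshift S (stal_class S (q @ E @ p @ remdups E)) (stal_class S v)"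
    using cshift_to_split_form[OF v _ pq(2)] E assms(3) by (simp add: cshift_sym)
  ultimately show ?thesis
    by (simp add: numeral_3_eq_3 relpowp_Suc_I2 del: relpowp.simps)
qed

lemma K_conn_iff:
  assumes "u \<in> lists S" "v \<in> lists S"
  shows "K_conn S (stal_class S u) (stal_class S v) \<longleftrightarrow>
    count_list u = count_list v \<and> (\<exists>p q. iota u = p @ q \<and> iota v = q @ p)"
proof
  assume "K_conn S (stal_class S u) (stal_class S v)"
  then show "count_list u = count_list v \<and> (\<exists>p q. iota u = p @ q \<and> iota v = q @ p)"
    using K_conn_invariants[OF _ assms] unfolding ex_rotate_iff_append by blast
next
  assume "count_list u = count_list v \<and> (\<exists>p q. iota u = p @ q \<and> iota v = q @ p)"
  then have "(cshift S ^^ 3) (stal_class S u) (stal_class S v)"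
    using cshift_relpowp_3[OF assms] by blast
  then show "K_conn S (stal_class S u) (stal_class S v)"
    unfolding K_conn_def by (rule relpowp_imp_rtranclp)
qed

lemma K_dist_le_3:
  assumes "s \<in> stal_elems S" "t \<in> stal_elems S" "K_conn S s t"
  shows "K_dist S s t \<le> 3"
proof -
  obtain u v where "u \<in> lists S" "v \<in> lists S" "s = stal_class S u" "t = stal_class S v"
    using assms(1,2) by (metis stal_elemsE)
  then show ?thesis
    using assms(3) K_conn_iff cshift_relpowp_3 K_dist_le by metis
qed

section \<open>Diameters\<close>

text \<open>Since \<open>cshift S\<close> is reflexive on elements, paths of length at most 2 can be padded.\<close>

lemma cshift_relpowp_le_2E:
  assumes "s \<in> stal_elems S" "t \<in> stal_elems S" "(cshift S ^^ k) s t" "k \<le> 2"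
  obtains m where "cshift S s m" "cshift S m t"
proof -
  consider "k = 0" | "k = 1" | "k = 2"
    using assms(4) by linarith
  then show ?thesis
  proof cases
    case 1
    then show ?thesis
      using that assms(1,3) cshift_refl by fastforce
  next
    case 2
    then show ?thesis
      using that assms(2,3) cshift_refl by fastforce
  next
    case 3
    then show ?thesis
      using that assms(3) by (metis numeral_2_eq_2 relpowp_Suc_0 relpowp_Suc_D2)
  qed
qed

lemma stal_class_replicate_append_rigid:
  assumes "distinct (a # r)" "0 < k" "w \<in> lists S" "replicate k a @ r \<in> lists S"
    and "stal_class S w = stal_class S (replicate k a @ r)"
  shows "w = replicate k a @ r"
proof -
  have "count_list w = count_list (replicate k a @ r)" "remdups w = remdups (replicate k a @ r)"
    using assms(3-5) stal_class_eq_iff by blast+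
  moreover have "remdups (replicate k a @ r) = a # r"
    using assms(1,2) by (simp add: remdups_append_conv distinct_remdups_id remdups_replicate)
  ultimately show ?thesis
    using eq_replicate_append_if_remdups_eq_Cons[of w a r] assms(1)
    by (simp add: count_list_distinct count_list_replicate)
qed

lemma cshift_from_rigid_class:
  assumes "\<And>w. w \<in> lists S \<Longrightarrow> stal_class S w = stal_class S w0 \<Longrightarrow> w = w0"
    and "cshift S (stal_class S w0) t"
  obtains n where "t = stal_class S (rotate n w0)"
proof -
  obtain x y where "x \<in> lists S" "y \<in> lists S" "stal_class S (x @ y) = stal_class S w0"
      "t = stal_class S (y @ x)"
    using assms(2) unfolding cshift_def by metis
  then have "x @ y = w0"
    using assms(1) by simp
  then have "t = stal_class S (rotate (length x) w0)"
    using \<open>t = stal_class S (y @ x)\<close> rotate_append[of x y] by simp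
  then show ?thesis
    using that by blast
qed

lemma remdups_rotate_1123_ne_1132:
  "remdups (rotate i [1, 1, 2, 3 :: nat]) \<noteq> remdups (rotate j [1, 1, 3, 2])"
proof -
  have "rotate 1 [1, 1, 2, 3 :: nat] = [1, 2, 3, 1]" "rotate 2 [1, 1, 2, 3 :: nat] = [2, 3, 1, 1]"
    "rotate 3 [1, 1, 2, 3 :: nat] = [3, 1, 1, 2]" "rotate 1 [1, 1, 3, 2 :: nat] = [1, 3, 2, 1]"
    "rotate 2 [1, 1, 3, 2 :: nat] = [3, 2, 1, 1]" "rotate 3 [1, 1, 3, 2 :: nat] = [2, 1, 1, 3]"
    by (simp_all add: numeral_2_eq_2 numeral_3_eq_3)
  moreover have "length [1, 1, 2, 3 :: nat] = 4" "length [1, 1, 3, 2 :: nat] = 4"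
    by simp_all
  ultimately have "rotate i [1, 1, 2, 3 :: nat] \<in> {[1, 1, 2, 3], [1, 2, 3, 1], [2, 3, 1, 1], [3, 1, 1, 2]}"
      "rotate j [1, 1, 3, 2 :: nat] \<in> {[1, 1, 3, 2], [1, 3, 2, 1], [3, 2, 1, 1], [2, 1, 1, 3]}"
    using rotate_mem_rotations_4 by metis+
  then show ?thesis
    by auto
qed

lemma K_conn_K_dist_1123_1132:
  assumes "{1, 2, 3} \<subseteq> S"
  defines "s \<equiv> stal_class S [1, 1, 2, 3]" and "t \<equiv> stal_class S [1, 1, 3, 2]"
  shows "K_conn S s t" "K_dist S s t = 3"
proof -
  have lists: "[1, 1, 2, 3] \<in> lists S" "[1, 1, 3, 2] \<in> lists S"
    using assms(1) by auto
  then have elems: "s \<in> stal_elems S" "t \<in> stal_elems S"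
    unfolding s_def t_def stal_elems_def by blast+
  have "iota [1, 1, 2, 3 :: nat] = [2] @ [3]" "iota [1, 1, 3, 2 :: nat] = [3] @ [2]"
    by (simp_all add: iota_def)
  moreover have "count_list [1, 1, 2, 3 :: nat] = count_list [1, 1, 3, 2]"
    by (simp add: fun_eq_iff)
  ultimately have path: "(cshift S ^^ 3) s t"
    unfolding s_def t_def using cshift_relpowp_3[OF lists] by blast
  then show "K_conn S s t"
    unfolding K_conn_def by (rule relpowp_imp_rtranclp)
  have rigid: "w = w0" if "w0 \<in> {[1, 1, 2, 3], [1, 1, 3, 2]}" "w \<in> lists S"
    "stal_class S w = stal_class S w0" for w w0
    using that lists stal_class_replicate_append_rigid[of 1 "[2, 3]" 2 w S]
      stal_class_replicate_append_rigid[of 1 "[3, 2]" 2 w S]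
    by (auto simp: numeral_2_eq_2)
  have no_short_path: "\<not> (cshift S ^^ j) s t" if "j < 3" for j
  proof
    assume "(cshift S ^^ j) s t"
    moreover have "j \<le> 2"
      using \<open>j < 3\<close> by simp
    ultimately obtain m where "cshift S s m" "cshift S m t"
      by (rule cshift_relpowp_le_2E[OF elems])
    then have "cshift S s m" "cshift S t m"
      by (simp_all add: cshift_sym)
    then obtain i k where "m = stal_class S (rotate i [1, 1, 2, 3])" "m = stal_class S (rotate k [1, 1, 3, 2])"
      unfolding s_def t_def using cshift_from_rigid_class rigid by (metis insertI1 insertI2 singletonI)
    then have "remdups (rotate i [1, 1, 2, 3 :: nat]) = remdups (rotate k [1, 1, 3, 2])"
      using lists stal_class_eq_iff[of "rotate i [1, 1, 2, 3]" S "rotate k [1, 1, 3, 2]"]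
      by (simp add: in_lists_conv_set)
    then show False
      using remdups_rotate_1123_ne_1132 by blast
  qed
  show "K_dist S s t = 3"
    using path no_short_path by (rule K_dist_eqI)
qed

lemma max_comp_diam_3:
  assumes "{1, 2, 3} \<subseteq> S"
  shows "max_comp_diam S 3"
  unfolding max_comp_diam_def
proof (intro conjI ballI impI)
  show "K_dist S s t \<le> 3" if "s \<in> stal_elems S" "t \<in> stal_elems S" "K_conn S s t" for s t
    using that by (rule K_dist_le_3)
  have "stal_class S [1, 1, 2, 3] \<in> stal_elems S" "stal_class S [1, 1, 3, 2] \<in> stal_elems S"
    using assms unfolding stal_elems_def by (auto intro!: imageI)
  then show "\<exists>s\<in>stal_elems S. \<exists>t\<in>stal_elems S. K_conn S s t \<and> K_dist S s t = 3"
    using K_conn_K_dist_1123_1132[OF assms] by blast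
qed

lemma stal_class_two_letters:
  assumes "a \<noteq> b" "u \<in> lists {a, b}"
  defines "x \<equiv> replicate (count_list u a) a" and "y \<equiv> replicate (count_list u b) b"
  shows "stal_class {a, b} u \<in> stal_class {a, b} ` {x @ y, y @ x}"
proof -
  have "stal_class {a, b} u = stal_class {a, b} (stal_nf u)"
    using stal_eq_stal_nf[OF assms(2)] by (simp add: stal_class_eq_iff_stal_eq)
  moreover have "stal_nf u \<in> {x @ y, y @ x}"
  proof -
    have no_block: "replicate (count_list u c) c = []" if "c \<notin> set (remdups u)" for c
      using that by simp
    have "remdups u \<in> {[], [a], [b], [a, b], [b, a]}"
      using assms(2) by (intro distinct_two_letters_cases) auto
    then consider "remdups u = []" | "remdups u = [a]" | "remdups u = [b]" | "remdups u = [a, b]"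
      | "remdups u = [b, a]"
      by blast
    then show ?thesis
    proof cases
      case 1
      then show ?thesis
        unfolding stal_nf_def x_def y_def using no_block[of a] no_block[of b] by simp
    next
      case 2
      then show ?thesis
        unfolding stal_nf_def x_def y_def using no_block[of b] assms(1) by simp
    next
      case 3
      then show ?thesis
        unfolding stal_nf_def x_def y_def using no_block[of a] assms(1) by simp
    qed (simp_all add: stal_nf_def x_def y_def)
  qed
  ultimately show ?thesis
    by (simp only: image_eqI)
qed

lemma K_dist_two_letters_le_1:
  assumes "a \<noteq> b" "s \<in> stal_elems {a, b}" "t \<in> stal_elems {a, b}" "K_conn {a, b} s t"
  shows "K_dist {a, b} s t \<le> 1"
proof -
  obtain u v where uv: "u \<in> lists {a, b}" "v \<in> lists {a, b}" "s = stal_class {a, b} u" "t = stal_class {a, b} v"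
    using assms(2,3) by (metis stal_elemsE)
  then have "count_list u = count_list v"
    using assms(4) K_conn_iff by blast
  define x y where "x = replicate (count_list u a) a" and "y = replicate (count_list u b) b"
  have "x \<in> lists {a, b}" "y \<in> lists {a, b}"
    unfolding x_def y_def by auto
  then have "cshift {a, b} (stal_class {a, b} (x @ y)) (stal_class {a, b} (y @ x))"
    unfolding cshift_def by blast
  moreover have "cshift {a, b} (stal_class {a, b} w) (stal_class {a, b} w)" if "w \<in> {x @ y, y @ x}" for w
    using that \<open>x \<in> lists {a, b}\<close> \<open>y \<in> lists {a, b}\<close>
    by (intro cshift_refl) (auto simp: stal_elems_def intro!: imageI)
  ultimately have "cshift {a, b} s' t'"
    if "s' \<in> stal_class {a, b} ` {x @ y, y @ x}" "t' \<in> stal_class {a, b} ` {x @ y, y @ x}" for s' t'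
    using that cshift_sym by blast
  then have "cshift {a, b} s t"
    using stal_class_two_letters[OF assms(1) uv(1)] stal_class_two_letters[OF assms(1) uv(2)]
    unfolding uv(3,4) x_def y_def \<open>count_list u = count_list v\<close> by blast
  then have "(cshift {a, b} ^^ 1) s t"
    by (simp only: relpowp_1)
  then show ?thesis
    by (rule K_dist_le)
qed

lemma max_comp_diam_2:
  assumes "a \<noteq> b"
  shows "max_comp_diam {a, b} 1"
  unfolding max_comp_diam_def
proof (intro conjI ballI impI)
  show "K_dist {a, b} s t \<le> 1" if "s \<in> stal_elems {a, b}" "t \<in> stal_elems {a, b}" "K_conn {a, b} s t" for s t
    using assms that by (rule K_dist_two_letters_le_1)
  let ?s = "stal_class {a, b} [a, b]" and ?t = "stal_class {a, b} [b, a]"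
  have elems: "?s \<in> stal_elems {a, b}" "?t \<in> stal_elems {a, b}"
    unfolding stal_elems_def by auto
  have "cshift {a, b} ?s ?t"
    unfolding cshift_def by (intro bexI[of _ "[a]"] bexI[of _ "[b]"]) auto
  then have "(cshift {a, b} ^^ 1) ?s ?t"
    by (simp only: relpowp_1)
  moreover have "?s \<noteq> ?t"
    using assms stal_class_eq_iff[of "[a, b]" "{a, b}" "[b, a]"] by auto
  then have "\<not> (cshift {a, b} ^^ j) ?s ?t" if "j < 1" for j
    using that by auto
  ultimately have "K_dist {a, b} ?s ?t = 1"
    by (rule K_dist_eqI)
  moreover have "K_conn {a, b} ?s ?t"
    unfolding K_conn_def using \<open>cshift {a, b} ?s ?t\<close> by blast
  ultimately show "\<exists>s\<in>stal_elems {a, b}. \<exists>t\<in>stal_elems {a, b}. K_conn {a, b} s t \<and> K_dist {a, b} s t = 1"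
    using elems by blast
qed

lemma cshift_one_letter: "cshift {a} s t \<Longrightarrow> s = t"
proof -
  assume "cshift {a} s t"
  then obtain x y where "x \<in> lists {a}" "y \<in> lists {a}" "s = stal_class {a} (x @ y)" "t = stal_class {a} (y @ x)"
    unfolding cshift_def by blast
  moreover have "w = replicate (length w) a" if "w \<in> lists {a}" for w
    using that by (induction w) auto
  ultimately show "s = t"
    by (metis add.commute replicate_add)
qed

lemma max_comp_diam_1: "max_comp_diam {a} 0"
  unfolding max_comp_diam_def
proof (intro conjI ballI impI)
  show "K_dist {a} s t \<le> 0" if "K_conn {a} s t" for s t
  proof -
    have "s = t"
      using that unfolding K_conn_def
      by (induction rule: rtranclp_induct) (auto dest: cshift_one_letter)
    then show ?thesis
      by (intro K_dist_le) simp
  qed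
  have "stal_class {a} [] \<in> stal_elems {a}" "K_conn {a} (stal_class {a} []) (stal_class {a} [])"
    unfolding stal_elems_def K_conn_def by auto
  moreover have "K_dist {a} (stal_class {a} []) (stal_class {a} []) = 0"
    by (intro K_dist_eqI) auto
  ultimately show "\<exists>s\<in>stal_elems {a}. \<exists>t\<in>stal_elems {a}. K_conn {a} s t \<and> K_dist {a} s t = 0"
    by blast
qed

theorem mainTheorem6:
  shows "(\<forall>u\<in>lists alphA. \<forall>v\<in>lists alphA.
            K_conn alphA (stal_class alphA u) (stal_class alphA v) \<longleftrightarrow>
              ((\<forall>a. count_list u a = count_list v a) \<and>
               (\<exists>p q. iota u = p @ q \<and> iota v = q @ p)))
       \<and> max_comp_diam alphA 3
       \<and> (\<forall>n\<ge>3. max_comp_diam (alphAn n) 3)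
       \<and> max_comp_diam (alphAn 2) 1
       \<and> max_comp_diam (alphAn 1) 0"
proof (intro conjI allI impI ballI)
  fix u v
  assume "u \<in> lists alphA" "v \<in> lists alphA"
  then show "K_conn alphA (stal_class alphA u) (stal_class alphA v) \<longleftrightarrow>
      (\<forall>a. count_list u a = count_list v a) \<and> (\<exists>p q. iota u = p @ q \<and> iota v = q @ p)"
    by (simp add: K_conn_iff fun_eq_iff)
next
  show "max_comp_diam alphA 3"
    by (rule max_comp_diam_3) (auto simp: alphA_def)
next
  fix n :: nat
  assume "3 \<le> n"
  then show "max_comp_diam (alphAn n) 3"
    by (intro max_comp_diam_3) (auto simp: alphAn_def)
next
  have "alphAn 2 = {1, 2}"
    by (auto simp: alphAn_def)
  then show "max_comp_diam (alphAn 2) 1"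
    using max_comp_diam_2[of 1 2] by simp
next
  have "alphAn 1 = {1}"
    by (auto simp: alphAn_def)
  then show "max_comp_diam (alphAn 1) 0"
    by (simp add: max_comp_diam_1)
qed

end
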